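(* Let $\mathbf X=\{X_n\}$ and $\mathbf Y=\{Y_n\}$ be general sources. If $\mathbf X$ is an approximating source for $\mathbf Y$, then $$\inf_{m>0}\ \liminf_{n\to\infty}\ \inf_{c\in\mathbb R}\Big\{\Pr\Big\{\log\tfrac{1}{P_{Y_n}(Y_n)}<c+m\Big\}-\Pr\Big\{\log\tfrac{1}{P_{X_n}(X_n)}<c\Big\}\Big\}\ \ge 0 .$$
   Context: Logarithms are natural. A general source $\mathbf X=\{X_n\}_{n\ge1}$ is a sequence of random variables, $X_n$ taking values in a countable set $\mathcal X_n$, with no consistency requirements between different $n$. Similarly $Y_n$ takes values in a countable set $\mathcal Y_n$. The variational distance is $d(P,Q)=\sum_a|P(a)-Q(a)|$. $\mathbf X$ is an approximating source for $\mathbf Y$ if there exist deterministic maps $\phi_n:\mathcal X_n\to\mathcal Y_n$ with $\lim_{n\to\infty}d(P_{Y_n},P_{\phi_n(X_n)})=0$. *)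

theory Defs
  imports "HOL-Probability.Probability"
begin

definition var_dist :: "'b pmf \<Rightarrow> 'b pmf \<Rightarrow> real" where
  "var_dist P Q = (\<Sum>\<^sub>\<infinity> b. \<bar>pmf P b - pmf Q b\<bar>)"

text \<open>A general source is a sequence of distributions PX n (the law of X_n).
  X is an approximating source for Y if there are deterministic maps phi n with
  d(P_{Y_n}, P_{phi_n(X_n)}) tending to 0.\<close>
definition approximating_source :: "(nat \<Rightarrow> 'a pmf) \<Rightarrow> (nat \<Rightarrow> 'b pmf) \<Rightarrow> bool" where
  "approximating_source PX PY \<longleftrightarrow>
     (\<exists>\<phi> :: nat \<Rightarrow> 'a \<Rightarrow> 'b. (\<lambda>n. var_dist (PY n) (map_pmf (\<phi> n) (PX n))) \<longlonglongrightarrow> 0)"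

end

theory Submission
  imports Defs
begin

(* Write F_p(c) = Pr_p{ln (1/p(x)) < c} for the information spectrum of a pmf p.
   Let q = PY n and let p = phi_n(PX n) be the approximating image distribution.
   (1) Merging outcomes by a deterministic map only increases point probabilities, hence
       F_(PX n)(c) <= F_p(c).
   (2) For m > 0, F_p(c) - F_q(c + m) <= (1 + 1/(1 - exp(-m))) * d(q, p): split the event
       {ln (1/p) < c} along B = {ln (1/q) < c + m}.  On the part inside B, p-mass exceeds
       q-mass by at most d(q, p); outside B every point has q(z) <= exp(-m) p(z), so
       (1 - exp(-m)) p(z) <= |q(z) - p(z)|, which bounds the remaining p-mass.
   Hence for each n the infimum over c is at least -K_m d(q, p), which tends to 0, so
   every liminf in the statement is nonnegative, and so is their infimum over m. *)

definition info_spectrum :: "'a pmf \<Rightarrow> real \<Rightarrow> real" where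
  "info_spectrum p c = measure_pmf.prob p {x. ln (1 / pmf p x) < c}"

lemma pmf_summable_on: "pmf p summable_on A"
  using pmf_abs_summable[of p A] abs_summable_equivalent abs_summable_summable by blast

lemma measure_pmf_eq_infsum: "measure_pmf.prob p A = infsum (pmf p) A"
  using measure_pmf_conv_infsetsum infsetsum_infsum pmf_abs_summable by metis

lemma abs_diff_pmf_summable_on: "(\<lambda>b. \<bar>pmf q b - pmf p b\<bar>) summable_on A"
proof (rule summable_on_comparison_test[where f="\<lambda>b. pmf q b + pmf p b"])
  show "(\<lambda>b. pmf q b + pmf p b) summable_on A"
    by (intro summable_on_add pmf_summable_on)
  show "\<bar>pmf q x - pmf p x\<bar> \<le> pmf q x + pmf p x" for x
    using pmf_nonneg[of q x] pmf_nonneg[of p x] by linarith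
qed auto

lemma infsum_abs_diff_le_var_dist: "infsum (\<lambda>b. \<bar>pmf q b - pmf p b\<bar>) A \<le> var_dist q p"
  unfolding var_dist_def
  by (rule infsum_mono2[OF abs_diff_pmf_summable_on abs_diff_pmf_summable_on]) auto

lemma prob_le_prob_plus_var_dist:
  "measure_pmf.prob p A \<le> measure_pmf.prob q A + var_dist q p"
proof -
  let ?g = "\<lambda>b. \<bar>pmf q b - pmf p b\<bar>"
  have "infsum (pmf p) A \<le> infsum (\<lambda>b. pmf q b + ?g b) A"
    by (rule infsum_mono[OF pmf_summable_on summable_on_add[OF pmf_summable_on
          abs_diff_pmf_summable_on]]) auto
  also have "\<dots> = infsum (pmf q) A + infsum ?g A"
    by (rule infsum_add) (auto intro: pmf_summable_on abs_diff_pmf_summable_on)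
  finally show ?thesis
    using infsum_abs_diff_le_var_dist[of q p A] by (simp add: measure_pmf_eq_infsum)
qed

lemma pmf_le_abs_diff_of_info_gap:
  fixes m c :: real
  assumes m: "m > 0"
    and p_info: "ln (1 / pmf p z) < c" and q_info: "\<not> ln (1 / pmf q z) < c + m"
  shows "(1 - exp (-m)) * pmf p z \<le> \<bar>pmf q z - pmf p z\<bar>"
proof (cases "pmf p z = 0")
  case True
  then show ?thesis by simp
next
  case False
  then have pz: "pmf p z > 0" using pmf_nonneg[of p z] by linarith
  have "ln (pmf p z) > -c" using p_info pz by (simp add: ln_div)
  then have p_large: "pmf p z > exp (-c)" using pz by (metis exp_less_cancel_iff exp_ln)
  have "pmf q z \<le> exp (-m) * pmf p z"
  proof (cases "pmf q z = 0")
    case True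
    then show ?thesis using pz by simp
  next
    case False
    then have qz: "pmf q z > 0" using pmf_nonneg[of q z] by linarith
    have "ln (pmf q z) \<le> -c - m" using q_info qz by (simp add: ln_div)
    then have "pmf q z \<le> exp (-c - m)" using qz by (metis exp_le_cancel_iff exp_ln)
    also have "\<dots> = exp (-m) * exp (-c)" by (simp add: exp_add[symmetric])
    also have "\<dots> \<le> exp (-m) * pmf p z" using p_large by simp
    finally show ?thesis .
  qed
  then show ?thesis by (simp add: algebra_simps)
qed

lemma info_spectrum_shift_le_var_dist:
  fixes m c :: real
  assumes m: "m > 0"
  shows "info_spectrum p c - info_spectrum q (c + m)
     \<le> (1 + 1 / (1 - exp (-m))) * var_dist q p"
proof -
  define S where "S = {z. ln (1 / pmf p z) < c}"
  define B where "B = {y. ln (1 / pmf q y) < c + m}"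
  define K where "K = 1 - exp (-m)"
  have K: "K > 0" using m by (simp add: K_def)
  let ?g = "\<lambda>b. \<bar>pmf q b - pmf p b\<bar>"
  have inside: "measure_pmf.prob p (S \<inter> B) \<le> measure_pmf.prob q B + var_dist q p"
    using prob_le_prob_plus_var_dist[of p "S \<inter> B" q]
      measure_pmf.finite_measure_mono[of "S \<inter> B" B q] by simp
  have "infsum (pmf p) (S - B) \<le> infsum (\<lambda>b. ?g b / K) (S - B)"
  proof (rule infsum_mono)
    show "(\<lambda>b. ?g b / K) summable_on S - B"
      by (simp add: divide_inverse summable_on_cmult_left abs_diff_pmf_summable_on)
    show "pmf p z \<le> ?g z / K" if "z \<in> S - B" for z
      using that pmf_le_abs_diff_of_info_gap[OF m, of p z c q] K
      by (simp add: S_def B_def K_def field_simps)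
  qed (rule pmf_summable_on)
  also have "\<dots> = infsum ?g (S - B) / K"
    by (simp add: divide_inverse infsum_cmult_left')
  also have "\<dots> \<le> var_dist q p / K"
    using K infsum_abs_diff_le_var_dist[of q p "S - B"] by (simp add: divide_right_mono)
  finally have outside: "measure_pmf.prob p (S - B) \<le> var_dist q p / K"
    by (simp add: measure_pmf_eq_infsum)
  have "measure_pmf.prob p S = measure_pmf.prob p (S \<inter> B) + measure_pmf.prob p (S - B)"
    using measure_pmf.finite_measure_Union[of "S \<inter> B" p "S - B"]
    by (simp add: Int_Diff_Un Int_Diff_disjoint)
  then show ?thesis
    using inside outside
    unfolding info_spectrum_def S_def[symmetric] B_def[symmetric] K_def[symmetric]
    by (simp add: algebra_simps)
qed

(* A deterministic map merges outcomes, so point probabilities only grow and the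
   information spectrum can only increase. *)
lemma info_spectrum_le_map_pmf:
  "info_spectrum p c \<le> info_spectrum (map_pmf f p) c"
proof -
  let ?T = "{z. ln (1 / pmf (map_pmf f p) z) < c}"
  have "{x. ln (1 / pmf p x) < c} \<inter> set_pmf p \<subseteq> f -` ?T"
  proof
    fix x assume x: "x \<in> {x. ln (1 / pmf p x) < c} \<inter> set_pmf p"
    then have px: "pmf p x > 0" by (simp add: pmf_positive)
    have "measure_pmf.prob p {x} \<le> measure_pmf.prob p (f -` {f x})"
      by (rule measure_pmf.finite_measure_mono) auto
    then have "pmf p x \<le> pmf (map_pmf f p) (f x)"
      by (simp add: pmf_map measure_pmf_single)
    then have "ln (1 / pmf (map_pmf f p) (f x)) \<le> ln (1 / pmf p x)"
      using px by (simp add: ln_div)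
    then show "x \<in> f -` ?T" using x by simp
  qed
  then have "measure_pmf.prob p ({x. ln (1 / pmf p x) < c} \<inter> set_pmf p)
      \<le> measure_pmf.prob p (f -` ?T)"
    by (rule measure_pmf.finite_measure_mono) simp
  then show ?thesis by (simp add: info_spectrum_def measure_Int_set_pmf)
qed

lemma liminf_nonneg_of_vanishing_lower_bound:
  fixes a :: "nat \<Rightarrow> ereal" and d :: "nat \<Rightarrow> real"
  assumes lower: "\<And>n. ereal (- (K * d n)) \<le> a n" and d: "d \<longlonglongrightarrow> 0"
  shows "0 \<le> liminf a"
proof -
  have "(\<lambda>n. ereal (- (K * d n))) \<longlonglongrightarrow> ereal (- (K * 0))"
    using d by (intro tendsto_intros lim_ereal[THEN iffD2])
  then have "liminf (\<lambda>n. ereal (- (K * d n))) = 0"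
    by (simp add: lim_imp_Liminf zero_ereal_def)
  moreover have "liminf (\<lambda>n. ereal (- (K * d n))) \<le> liminf a"
    by (rule Liminf_mono) (use lower in auto)
  ultimately show ?thesis by simp
qed

theorem lemma6:
  fixes PX :: "nat \<Rightarrow> ('a::countable) pmf" and PY :: "nat \<Rightarrow> ('b::countable) pmf"
  assumes "approximating_source PX PY"
  shows "(INF m\<in>{0::real<..}. liminf (\<lambda>n. INF c::real.
            ereal (measure_pmf.prob (PY n) {y. ln (1 / pmf (PY n) y) < c + m}
                 - measure_pmf.prob (PX n) {x. ln (1 / pmf (PX n) x) < c}))) \<ge> 0"
proof -
  obtain \<phi> :: "nat \<Rightarrow> 'a \<Rightarrow> 'b"
    where lim: "(\<lambda>n. var_dist (PY n) (map_pmf (\<phi> n) (PX n))) \<longlonglongrightarrow> 0"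
    using assms unfolding approximating_source_def by blast
  have "0 \<le> liminf (\<lambda>n. INF c::real.
           ereal (info_spectrum (PY n) (c + m) - info_spectrum (PX n) c))" if m: "m > 0" for m
  proof (rule liminf_nonneg_of_vanishing_lower_bound[OF _ lim])
    fix n
    let ?p = "map_pmf (\<phi> n) (PX n)"
    show "ereal (- ((1 + 1 / (1 - exp (-m))) * var_dist (PY n) ?p))
        \<le> (INF c. ereal (info_spectrum (PY n) (c + m) - info_spectrum (PX n) c))"
      using info_spectrum_le_map_pmf[of "PX n" _ "\<phi> n"]
        info_spectrum_shift_le_var_dist[OF m, of ?p _ "PY n"]
      by (intro INF_greatest) (smt (verit) ereal_less_eq(3))
  qed
  then show ?thesis by (auto intro: INF_greatest simp: info_spectrum_def)
qed

end
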